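(* There exists an action of the free group $F_2$ on two generators on $L_1[0,1]$ by lattice (positive) linear isometries such that there is no equivalent strictly convex norm on $L_1[0,1]$ invariant with respect to this action.
   Context: A norm $\|\cdot\|'$ is invariant with respect to the action if $\|g\cdot f\|'=\|f\|'$ for all $g\in F_2$, $f\in L_1[0,1]$; it is strictly convex if for every $x\neq y$ with $\|x\|'=\|y\|'$ one has $\|\frac{x+y}{2}\|'<\|x\|'$. *)

theory Defs
  imports "HOL-Analysis.Analysis"
begin

text \<open>L_1[0,1]: Lebesgue integrable real functions on [0,1], modulo a.e. equality.
  Elements are represented by functions real => real; all notions below respect a.e. equality.\<close>

abbreviation M01 :: "real measure" where
  "M01 \<equiv> lebesgue_on {0..1}"

definition L1 :: "(real \<Rightarrow> real) set" where
  "L1 = {f. integrable M01 f}"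

definition aeq :: "(real \<Rightarrow> real) \<Rightarrow> (real \<Rightarrow> real) \<Rightarrow> bool" where
  "aeq f g \<longleftrightarrow> (AE x in M01. f x = g x)"

definition l1norm :: "(real \<Rightarrow> real) \<Rightarrow> real" where
  "l1norm f = (LINT x|M01. \<bar>f x\<bar>)"

definition lattice_linear_isometry :: "((real \<Rightarrow> real) \<Rightarrow> (real \<Rightarrow> real)) \<Rightarrow> bool" where
  "lattice_linear_isometry T \<longleftrightarrow>
     (\<forall>f\<in>L1. T f \<in> L1) \<and>
     (\<forall>f\<in>L1. \<forall>g\<in>L1. aeq f g \<longrightarrow> aeq (T f) (T g)) \<and>
     (\<forall>f\<in>L1. \<forall>g\<in>L1. \<forall>a b::real.
        aeq (T (\<lambda>x. a * f x + b * g x)) (\<lambda>x. a * T f x + b * T g x)) \<and>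
     (\<forall>f\<in>L1. \<forall>g\<in>L1. aeq (T (\<lambda>x. max (f x) (g x))) (\<lambda>x. max (T f x) (T g x))) \<and>
     (\<forall>f\<in>L1. aeq (T (\<lambda>x. \<bar>f x\<bar>)) (\<lambda>x. \<bar>T f x\<bar>)) \<and>
     (\<forall>f\<in>L1. l1norm (T f) = l1norm f)"

definition inverse_ops :: "((real \<Rightarrow> real) \<Rightarrow> (real \<Rightarrow> real)) \<Rightarrow> ((real \<Rightarrow> real) \<Rightarrow> (real \<Rightarrow> real)) \<Rightarrow> bool" where
  "inverse_ops T S \<longleftrightarrow> (\<forall>f\<in>L1. aeq (S (T f)) f \<and> aeq (T (S f)) f)"

text \<open>The free group F_2 on generators a, b: every element is a word in a, a^-1, b, b^-1.
  An action of F_2 is determined by the (invertible) images of the generators; a word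
  acts by composition of the corresponding operators.\<close>
datatype F2_letter = GenA | GenA_inv | GenB | GenB_inv

fun letter_op :: "('x \<Rightarrow> 'x) \<Rightarrow> ('x \<Rightarrow> 'x) \<Rightarrow> ('x \<Rightarrow> 'x) \<Rightarrow> ('x \<Rightarrow> 'x) \<Rightarrow> F2_letter \<Rightarrow> ('x \<Rightarrow> 'x)" where
  "letter_op TA SA TB SB GenA = TA"
| "letter_op TA SA TB SB GenA_inv = SA"
| "letter_op TA SA TB SB GenB = TB"
| "letter_op TA SA TB SB GenB_inv = SB"

definition word_op :: "('x \<Rightarrow> 'x) \<Rightarrow> ('x \<Rightarrow> 'x) \<Rightarrow> ('x \<Rightarrow> 'x) \<Rightarrow> ('x \<Rightarrow> 'x) \<Rightarrow> F2_letter list \<Rightarrow> ('x \<Rightarrow> 'x)" where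
  "word_op TA SA TB SB w = foldr (\<lambda>l h. letter_op TA SA TB SB l \<circ> h) w id"

definition equivalent_norm :: "((real \<Rightarrow> real) \<Rightarrow> real) \<Rightarrow> bool" where
  "equivalent_norm N \<longleftrightarrow>
     (\<forall>f\<in>L1. \<forall>g\<in>L1. aeq f g \<longrightarrow> N f = N g) \<and>
     (\<forall>f\<in>L1. N f = 0 \<longleftrightarrow> aeq f (\<lambda>x. 0)) \<and>
     (\<forall>f\<in>L1. \<forall>c::real. N (\<lambda>x. c * f x) = \<bar>c\<bar> * N f) \<and>
     (\<forall>f\<in>L1. \<forall>g\<in>L1. N (\<lambda>x. f x + g x) \<le> N f + N g) \<and>
     (\<exists>c C. 0 < c \<and> 0 < C \<and> (\<forall>f\<in>L1. c * l1norm f \<le> N f \<and> N f \<le> C * l1norm f))"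

definition strictly_convex_norm :: "((real \<Rightarrow> real) \<Rightarrow> real) \<Rightarrow> bool" where
  "strictly_convex_norm N \<longleftrightarrow>
     (\<forall>f\<in>L1. \<forall>g\<in>L1. \<not> aeq f g \<and> N f = N g \<longrightarrow> N (\<lambda>x. (f x + g x) / 2) < N f)"

end

theory Submission
  imports Defs
begin

text \<open>For 0 < k, m < 1 let \<phi> be the increasing piecewise linear homeomorphism of [0,1] mapping
  [0,k] onto [0,m] and [k,1] onto [m,1]. The weighted composition operator f \<mapsto> \<phi>' \<cdot> (f \<circ> \<phi>)
  is a positive invertible isometry of L_1[0,1] preserving the lattice operations, and the
  maps with breakpoints (k,m) and (m,k) give mutually inverse operators.
  Let A and B be the operators for (1/2, 1/4) and (1/2, 3/8). Then A 1 is 1/2 on [0,1/2]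
  and 3/2 on ]1/2,1], and B 1 is 3/4 and 5/4 there, so B 1 is the midpoint of 1 and A 1.
  An invariant norm N has N 1 = N (A 1) = N (B 1), which a strictly convex norm forbids
  since 1 and A 1 differ on a set of positive measure.\<close>

lemma L1_iff_absolutely_integrable: "f \<in> L1 \<longleftrightarrow> f absolutely_integrable_on {0..1}"
  unfolding L1_def set_integrable_def mem_Collect_eq
  by (subst integrable_restrict_space) auto

lemma l1norm_eq_integral: "f \<in> L1 \<Longrightarrow> l1norm f = integral {0..1} (\<lambda>x. \<bar>f x\<bar>)"
  unfolding l1norm_def L1_def
  by (rule lebesgue_integral_eq_integral) auto

lemma aeq_iff_l1norm_diff_eq_0:
  assumes "f \<in> L1" "g \<in> L1"
  shows "aeq f g \<longleftrightarrow> l1norm (\<lambda>x. f x - g x) = 0"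
proof -
  have "integrable M01 (\<lambda>x. \<bar>f x - g x\<bar>)"
    using assms by (simp add: L1_def)
  then have "l1norm (\<lambda>x. f x - g x) = 0 \<longleftrightarrow> (AE x in M01. \<bar>f x - g x\<bar> = 0)"
    unfolding l1norm_def by (rule integral_nonneg_eq_0_iff_AE) auto
  then show ?thesis by (simp add: aeq_def)
qed

lemma not_aeq_if_differ_on_interval:
  assumes ab: "0 \<le> a" "a < b" "b \<le> 1" and differ: "\<And>x. x \<in> {a..b} \<Longrightarrow> f x \<noteq> g x"
  shows "\<not> aeq f g"
proof
  assume "aeq f g"
  then obtain Z where Z: "{x \<in> space M01. f x \<noteq> g x} \<subseteq> Z" "emeasure M01 Z = 0" "Z \<in> sets M01"
    unfolding aeq_def by (rule AE_E)
  have "{a..b} \<subseteq> {x \<in> space M01. f x \<noteq> g x}"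
    using ab differ by auto
  then have "emeasure M01 {a..b} \<le> emeasure M01 Z"
    using Z by (intro emeasure_mono) auto
  moreover have "emeasure M01 {a..b} = ennreal (b - a)"
    using ab by (subst emeasure_restrict_space) auto
  ultimately have "ennreal (b - a) \<le> 0"
    using Z by simp
  with ab show False
    by simp
qed

lemma no_invariant_strictly_convex_norm_if_orbit_midpoint:
  assumes f: "f \<in> L1" and TA_f: "TA f \<in> L1" and "\<not> aeq f (TA f)"
    and midpoint: "(\<lambda>x. (f x + TA f x) / 2) = TB f"
  shows "\<not> (\<exists>N. strictly_convex_norm N \<and> (\<forall>w. \<forall>f\<in>L1. N (word_op TA SA TB SB w f) = N f))"
proof
  assume "\<exists>N. strictly_convex_norm N \<and> (\<forall>w. \<forall>f\<in>L1. N (word_op TA SA TB SB w f) = N f)"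
  then obtain N where sc: "strictly_convex_norm N"
    and inv: "\<And>w. N (word_op TA SA TB SB w f) = N f"
    using f by blast
  have "N (TA f) = N f" "N (TB f) = N f"
    using inv[of "[GenA]"] inv[of "[GenB]"] by (simp_all add: word_op_def)
  moreover have "\<not> aeq f (TA f) \<and> N f = N (TA f) \<longrightarrow> N (\<lambda>x. (f x + TA f x) / 2) < N f"
    using sc f TA_f unfolding strictly_convex_norm_def by blast
  ultimately have "N (\<lambda>x. (f x + TA f x) / 2) < N f"
    using \<open>\<not> aeq f (TA f)\<close> by simp
  with midpoint \<open>N (TB f) = N f\<close> show False
    by simp
qed

lemma has_integral_affine_substitution:
  fixes f :: "real \<Rightarrow> real"
  assumes f: "(f has_integral I) {a..b}" and s: "s > 0"
  shows "((\<lambda>x. s * f (s * x + c)) has_integral I) {(a - c) / s..(b - c) / s}"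
proof -
  have "((\<lambda>x. f (s * x + c)) has_integral I / s) {(a - c) / s..(b - c) / s}"
    using has_integral_affinity'[of f I a b s c] f s by (simp add: divide_inverse mult.commute)
  from has_integral_cmul[OF this, of s] show ?thesis
    using s by simp
qed

definition pl_map :: "real \<Rightarrow> real \<Rightarrow> real \<Rightarrow> real" where
  "pl_map k m x = (if x \<le> k then m / k * x else m + (1 - m) / (1 - k) * (x - k))"

definition pl_deriv :: "real \<Rightarrow> real \<Rightarrow> real \<Rightarrow> real" where
  "pl_deriv k m x = (if x \<le> k then m / k else (1 - m) / (1 - k))"

definition pl_op :: "real \<Rightarrow> real \<Rightarrow> (real \<Rightarrow> real) \<Rightarrow> (real \<Rightarrow> real)" where
  "pl_op k m f = (\<lambda>x. pl_deriv k m x * f (pl_map k m x))"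

lemma pl_deriv_pos: "0 < k \<Longrightarrow> k < 1 \<Longrightarrow> 0 < m \<Longrightarrow> m < 1 \<Longrightarrow> pl_deriv k m x > 0"
  by (simp add: pl_deriv_def)

lemma pl_map_inverse:
  assumes k: "0 < k" "k < 1" and m: "0 < m" "m < 1"
  shows "pl_map m k (pl_map k m x) = x" "pl_deriv m k (pl_map k m x) * pl_deriv k m x = 1"
proof -
  have "pl_map m k (pl_map k m x) = x \<and> pl_deriv m k (pl_map k m x) * pl_deriv k m x = 1"
  proof (cases "x \<le> k")
    case True
    have "m / k * x \<le> m / k * k" using True k m by (intro mult_left_mono) auto
    with True k m show ?thesis by (simp add: pl_map_def pl_deriv_def)
  next
    case False
    have "0 < (1 - m) / (1 - k) * (x - k)" using False k m by simp
    then have "\<not> m + (1 - m) / (1 - k) * (x - k) \<le> m" by simp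
    with False k m mult_pos_pos[of "1 - k" "1 - m"] show ?thesis
      by (simp add: pl_map_def pl_deriv_def field_simps)
  qed
  then show "pl_map m k (pl_map k m x) = x" "pl_deriv m k (pl_map k m x) * pl_deriv k m x = 1"
    by auto
qed

lemma pl_op_has_integral:
  fixes f :: "real \<Rightarrow> real"
  assumes k: "0 < k" "k < 1" and m: "0 < m" "m < 1" and f: "f integrable_on {0..1}"
  shows "(pl_op k m f has_integral integral {0..1} f) {0..1}"
proof -
  define s1 where "s1 = m / k"
  define s2 where "s2 = (1 - m) / (1 - k)"
  define c where "c = m - s2 * k"
  have s: "s1 > 0" "s2 > 0" using k m by (simp_all add: s1_def s2_def)
  have "f integrable_on {0..m}" "f integrable_on {m..1}"
    using integrable_on_subinterval[OF f] m by auto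
  then have I: "(f has_integral integral {0..m} f) {0..m}"
    and J: "(f has_integral integral {m..1} f) {m..1}"
    by auto
  have "((\<lambda>x. s1 * f (s1 * x + 0)) has_integral integral {0..m} f) {0..k}"
    using has_integral_affine_substitution[OF I s(1), of 0] k m by (simp add: s1_def)
  then have left: "(pl_op k m f has_integral integral {0..m} f) {0..k}"
    by (rule has_integral_eq[rotated]) (simp add: pl_op_def pl_deriv_def pl_map_def s1_def)
  have "(1 - c) / s2 = 1"
    using k m s mult_pos_pos[of "1 - k" "1 - m"] by (simp add: c_def s2_def field_simps)
  then have "((\<lambda>x. s2 * f (s2 * x + c)) has_integral integral {m..1} f) {k..1}"
    using has_integral_affine_substitution[OF J s(2), of c] s by (simp add: c_def)
  moreover have "pl_map k m x = s2 * x + c" "pl_deriv k m x = s2" if "x > k" for x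
    using that
    by (auto simp: pl_map_def pl_deriv_def s2_def c_def add_divide_distrib[symmetric] algebra_simps)
  ultimately have right: "(pl_op k m f has_integral integral {m..1} f) {k..1}"
    by (elim has_integral_spike_finite[of "{k}", rotated 2]) (auto simp: pl_op_def)
  have "integral {0..m} f + integral {m..1} f = integral {0..1} f"
    using Henstock_Kurzweil_Integration.integral_combine[OF _ _ f, of m] m by simp
  with has_integral_combine[OF _ _ left right] k show ?thesis
    by simp
qed

lemma abs_pl_op:
  assumes "0 < k" "k < 1" "0 < m" "m < 1"
  shows "\<bar>pl_op k m f x\<bar> = pl_op k m (\<lambda>y. \<bar>f y\<bar>) x"
  using pl_deriv_pos[OF assms, of x] by (simp add: pl_op_def abs_mult)

lemma pl_op_L1_l1norm:
  assumes k: "0 < k" "k < 1" and m: "0 < m" "m < 1" and f: "f \<in> L1"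
  shows "pl_op k m f \<in> L1" "l1norm (pl_op k m f) = l1norm f"
proof -
  have fa: "f absolutely_integrable_on {0..1}"
    using f by (simp add: L1_iff_absolutely_integrable)
  have fi: "f integrable_on {0..1}"
    using fa set_lebesgue_integral_eq_integral(1) by blast
  have abs_fi: "(\<lambda>x. \<bar>f x\<bar>) integrable_on {0..1}"
    using fa unfolding absolutely_integrable_on_def real_norm_def by blast
  have abs_int: "(pl_op k m (\<lambda>x. \<bar>f x\<bar>) has_integral integral {0..1} (\<lambda>x. \<bar>f x\<bar>)) {0..1}"
    using pl_op_has_integral[OF k m abs_fi] .
  have "pl_op k m f absolutely_integrable_on {0..1}"
    using pl_op_has_integral[OF k m fi] abs_int abs_pl_op[OF k m, of f]
    by (intro absolutely_integrable_integrable_bound[where g="pl_op k m (\<lambda>x. \<bar>f x\<bar>)"]) auto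
  then show L1: "pl_op k m f \<in> L1"
    by (simp add: L1_iff_absolutely_integrable)
  show "l1norm (pl_op k m f) = l1norm f"
    using abs_int abs_pl_op[OF k m, of f] l1norm_eq_integral[OF L1] l1norm_eq_integral[OF f]
    by (simp add: integral_unique)
qed

lemma lattice_linear_isometry_pl_op:
  assumes k: "0 < k" "k < 1" and m: "0 < m" "m < 1"
  shows "lattice_linear_isometry (pl_op k m)"
  unfolding lattice_linear_isometry_def
proof (intro conjI ballI allI impI)
  fix f assume f: "f \<in> L1"
  show "pl_op k m f \<in> L1" "l1norm (pl_op k m f) = l1norm f"
    using pl_op_L1_l1norm[OF k m f] by auto
  show "aeq (pl_op k m (\<lambda>x. \<bar>f x\<bar>)) (\<lambda>x. \<bar>pl_op k m f x\<bar>)"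
    unfolding aeq_def using abs_pl_op[OF k m] by simp
next
  fix f g assume f: "f \<in> L1" and g: "g \<in> L1"
  have "c * max a b = max (c * a) (c * b)" if "c > 0" for a b c :: real
    using that by (simp add: max_def)
  then show "aeq (pl_op k m (\<lambda>x. max (f x) (g x))) (\<lambda>x. max (pl_op k m f x) (pl_op k m g x))"
    unfolding aeq_def using pl_deriv_pos[OF k m] by (simp add: pl_op_def)
  fix a b :: real
  show "aeq (pl_op k m (\<lambda>x. a * f x + b * g x)) (\<lambda>x. a * pl_op k m f x + b * pl_op k m g x)"
    unfolding aeq_def by (simp add: pl_op_def algebra_simps)
next
  fix f g assume f: "f \<in> L1" and g: "g \<in> L1" and "aeq f g"
  have diff: "pl_op k m (\<lambda>x. f x - g x) = (\<lambda>x. pl_op k m f x - pl_op k m g x)"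
    by (simp add: pl_op_def algebra_simps)
  have "l1norm (\<lambda>x. f x - g x) = 0"
    using \<open>aeq f g\<close> aeq_iff_l1norm_diff_eq_0[OF f g] by simp
  then have "l1norm (\<lambda>x. pl_op k m f x - pl_op k m g x) = 0"
    using pl_op_L1_l1norm(2)[OF k m, of "\<lambda>x. f x - g x"] f g by (simp add: diff L1_def)
  then show "aeq (pl_op k m f) (pl_op k m g)"
    using aeq_iff_l1norm_diff_eq_0 pl_op_L1_l1norm(1)[OF k m] f g by simp
qed

lemma inverse_ops_pl_op:
  assumes k: "0 < k" "k < 1" and m: "0 < m" "m < 1"
  shows "inverse_ops (pl_op k m) (pl_op m k)"
  unfolding inverse_ops_def aeq_def
proof (intro ballI conjI AE_I2)
  fix f :: "real \<Rightarrow> real" and x :: real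
  have "pl_op m k (pl_op k m f) x =
      (pl_deriv k m (pl_map m k x) * pl_deriv m k x) * f (pl_map k m (pl_map m k x))"
    by (simp add: pl_op_def ac_simps)
  then show "pl_op m k (pl_op k m f) x = f x"
    using pl_map_inverse[OF m k, of x] by simp
  have "pl_op k m (pl_op m k f) x =
      (pl_deriv m k (pl_map k m x) * pl_deriv k m x) * f (pl_map m k (pl_map k m x))"
    by (simp add: pl_op_def ac_simps)
  then show "pl_op k m (pl_op m k f) x = f x"
    using pl_map_inverse[OF k m, of x] by simp
qed

theorem proposition5p1:
  shows "\<exists>TA SA TB SB.
     lattice_linear_isometry TA \<and> lattice_linear_isometry SA \<and>
     lattice_linear_isometry TB \<and> lattice_linear_isometry SB \<and>
     inverse_ops TA SA \<and> inverse_ops TB SB \<and>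
     \<not> (\<exists>N. equivalent_norm N \<and> strictly_convex_norm N \<and>
            (\<forall>w. \<forall>f\<in>L1. N (word_op TA SA TB SB w f) = N f))"
proof -
  let ?A = "pl_op (1/2) (1/4)" and ?A' = "pl_op (1/4) (1/2)"
    and ?B = "pl_op (1/2) (3/8)" and ?B' = "pl_op (3/8) (1/2)"
  define one :: "real \<Rightarrow> real" where "one = (\<lambda>x. 1)"
  have one: "one \<in> L1"
    by (simp add: one_def L1_def continuous_imp_integrable_real)
  have "lattice_linear_isometry ?A" "lattice_linear_isometry ?A'"
    "lattice_linear_isometry ?B" "lattice_linear_isometry ?B'"
    by (simp_all add: lattice_linear_isometry_pl_op)
  moreover have "inverse_ops ?A ?A'" "inverse_ops ?B ?B'"
    by (simp_all add: inverse_ops_pl_op)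
  moreover have "\<not> (\<exists>N. strictly_convex_norm N \<and> (\<forall>w. \<forall>f\<in>L1. N (word_op ?A ?A' ?B ?B' w f) = N f))"
  proof (rule no_invariant_strictly_convex_norm_if_orbit_midpoint[OF one])
    show "?A one \<in> L1"
      using pl_op_L1_l1norm(1)[OF _ _ _ _ one] by simp
    show "\<not> aeq one (?A one)"
      by (rule not_aeq_if_differ_on_interval[of 0 "1/2"]) (auto simp: one_def pl_op_def pl_deriv_def)
    show "(\<lambda>x. (one x + ?A one x) / 2) = ?B one"
      by (auto simp: one_def pl_op_def pl_deriv_def)
  qed
  ultimately show ?thesis
    by blast
qed

end
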